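(* Consider the interconnected system described in the context, with a partition $\{1,\dots,n\}=I_\Sigma\cup I_{\max}$. Assume each subsystem has the asymptotic gain (AG) property in the mixed sense, i.e. there are $\overline\gamma_{ij},\overline\gamma_i\in\mathcal{K}\cup\{0\}$ such that for every initial value $x_i(0)$ and all inputs $x_j\in L_\infty(\mathbb{R}_+,\mathbb{R}^{N_j})$ ($j\ne i$), $u\in L_\infty$, the solution $x_i$ exists, is unique, and $\limsup_{t\to\infty}|x_i(t)|\le\sum_{j}\overline\gamma_{ij}(\|x_j\|_\infty)+\overline\gamma_i(\|u\|_\infty)$ if $i\in I_\Sigma$, and $\limsup_{t\to\infty}|x_i(t)|\le\max\{\max_j\overline\gamma_{ij}(\|x_j\|_\infty),\overline\gamma_i(\|u\|_\infty)\}$ if $i\in I_{\max}$. Assume further that solutions of the whole system $\dot x=f(x,u)$ exist for all positive times and are uniformly bounded. Let $\Gamma$ be the gain operator built from $(\overline\gamma_{ij})$ (with $\overline\gamma_{ii}\equiv0$). If there exists $\alpha\in\mathcal{K}_\infty$ such that $\Gamma\circ D_\alpha(s)\not\ge s$ for all $s\in\mathbb{R}^n_+\setminus\{0\}$, then the whole system has the AG property: there is $\overline\gamma\in\mathcal{K}$ with $\limsup_{t\to\infty}|x(t)|\le\overline\gamma(\|u\|_\infty)$ for all $x(0)$ and all $u\in L_\infty$.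
   Context: The interconnection is $\dot x_i=f_i(x_1,\dots,x_n,u_i)$, $i=1,\dots,n$, with $x_i\in\mathbb{R}^{N_i}$, $u_i\in\mathbb{R}^{m_i}$, where each $f_i$ is continuous and, for every $r$, locally Lipschitz in $x=(x_1^T,\dots,x_n^T)^T$ uniformly in $u_i$ with $|u_i|\le r$; it is written as $\dot x=f(x,u)$ with $u=(u_1^T,\dots,u_n^T)^T$. $\|\cdot\|_\infty$ is the essential supremum norm; $|\cdot|$ a norm. $\mathcal{K}$: continuous strictly increasing functions $\mathbb{R}_+\to\mathbb{R}_+$ vanishing at $0$; $\mathcal{K}_\infty$: unbounded ones. For $x,y\in\mathbb{R}^n$, $x\not\ge y$ means $x_i<y_i$ for some $i$. The gain operator is $\Gamma(s)=(\Gamma_1(s),\dots,\Gamma_n(s))^T$ with $\Gamma_i(s)=\sum_j\overline\gamma_{ij}(s_j)$ for $i\in I_\Sigma$ and $\Gamma_i(s)=\max_j\overline\gamma_{ij}(s_j)$ for $i\in I_{\max}$; $D_\alpha(s)=(D_1(s_1),\dots,D_n(s_n))^T$ with $D_i=\mathrm{id}+\alpha$ for $i\in I_\Sigma$ and $D_i=\mathrm{id}$ for $i\in I_{\max}$. *)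

theory Defs
  imports "HOL-Analysis.Analysis" "HOL-Probability.Essential_Supremum"
begin

definition class_K :: "(real \<Rightarrow> real) \<Rightarrow> bool" where
  "class_K g \<longleftrightarrow> continuous_on {0..} g \<and> strict_mono_on {0..} g \<and> g 0 = 0"

definition class_K_inf :: "(real \<Rightarrow> real) \<Rightarrow> bool" where
  "class_K_inf g \<longleftrightarrow> class_K g \<and> (\<forall>M. \<exists>s\<ge>0. g s > M)"

definition class_K0 :: "(real \<Rightarrow> real) \<Rightarrow> bool" where
  "class_K0 g \<longleftrightarrow> class_K g \<or> (\<forall>s\<ge>0. g s = 0)"

definition Linf :: "(real \<Rightarrow> 'a::euclidean_space) \<Rightarrow> bool" where
  "Linf u \<longleftrightarrow> u \<in> borel_measurable (restrict_space lebesgue {0..})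
              \<and> (\<exists>B. AE t in lebesgue. 0 \<le> t \<longrightarrow> norm (u t) \<le> B)"

definition linf_norm :: "(real \<Rightarrow> 'a::euclidean_space) \<Rightarrow> real" where
  "linf_norm u = real_of_ereal (esssup (restrict_space lebesgue {0..}) (\<lambda>t. ereal (norm (u t))))"

text \<open>The full state space is R^N = real^'n, whose coordinates are
  partitioned into n blocks by blk :: 'n => nat (block i = coordinates k with blk k = i);
  block i is the state x_i in R^{N_i}, N_i = card of block i. Likewise for inputs.
  blkv blk i x is x with all coordinates outside block i set to zero, so that
  norm (blkv blk i x) is the (Euclidean) norm of the component x_i.\<close>

definition blkv :: "('n \<Rightarrow> nat) \<Rightarrow> nat \<Rightarrow> real^'n \<Rightarrow> real^'n" where
  "blkv blk i x = (\<chi> k. if blk k = i then x $ k else 0)"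

text \<open>Replace block i of w by block i of a (the other blocks of w act as external inputs).\<close>
definition merge_blk :: "('n \<Rightarrow> nat) \<Rightarrow> nat \<Rightarrow> real^'n \<Rightarrow> real^'n \<Rightarrow> real^'n" where
  "merge_blk blk i a w = blkv blk i a + (w - blkv blk i w)"

definition sys_solution ::
  "(real^'n \<Rightarrow> real^'m \<Rightarrow> real^'n) \<Rightarrow> (real \<Rightarrow> real^'m) \<Rightarrow> (real \<Rightarrow> real^'n) \<Rightarrow> bool" where
  "sys_solution f u x \<longleftrightarrow> continuous_on {0..} x \<and>
     (\<forall>t\<ge>0. ((\<lambda>s. f (x s) (u s)) has_integral (x t - x 0)) {0..t})"

text \<open>(Caratheodory) solution on [0,oo) of subsystem i,
  x_i' = f_i(x_1,..,x_n,u_i), where x_j (j ~= i) are the blocks of the external input w.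
  The trajectory xi takes values in block i.\<close>
definition sub_solution ::
  "('n \<Rightarrow> nat) \<Rightarrow> (real^'n \<Rightarrow> real^'m \<Rightarrow> real^'n) \<Rightarrow> nat \<Rightarrow> (real \<Rightarrow> real^'n)
     \<Rightarrow> (real \<Rightarrow> real^'m) \<Rightarrow> (real \<Rightarrow> real^'n) \<Rightarrow> bool" where
  "sub_solution blk f i w u xi \<longleftrightarrow> continuous_on {0..} xi \<and>
     (\<forall>t\<ge>0. blkv blk i (xi t) = xi t) \<and>
     (\<forall>t\<ge>0. ((\<lambda>s. blkv blk i (f (merge_blk blk i (xi s) (w s)) (u s)))
               has_integral (xi t - xi 0)) {0..t})"

text \<open>Gain operator Gamma and D_alpha on R^n_+ (vectors s :: nat => real, indices < n).\<close>
definition gain_op ::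
  "nat \<Rightarrow> nat set \<Rightarrow> (nat \<Rightarrow> nat \<Rightarrow> real \<Rightarrow> real) \<Rightarrow> (nat \<Rightarrow> real) \<Rightarrow> nat \<Rightarrow> real" where
  "gain_op n Isum g s i =
     (if i \<in> Isum then (\<Sum>j<n. g i j (s j)) else Max ((\<lambda>j. g i j (s j)) ` {..<n}))"

definition D_alpha :: "nat set \<Rightarrow> (real \<Rightarrow> real) \<Rightarrow> (nat \<Rightarrow> real) \<Rightarrow> nat \<Rightarrow> real" where
  "D_alpha Isum \<alpha> s i = (if i \<in> Isum then s i + \<alpha> (s i) else s i)"

definition AG_sub ::
  "nat \<Rightarrow> nat set \<Rightarrow> ('n \<Rightarrow> nat) \<Rightarrow> (real^'n \<Rightarrow> real^'m \<Rightarrow> real^'n)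
     \<Rightarrow> (nat \<Rightarrow> nat \<Rightarrow> real \<Rightarrow> real) \<Rightarrow> (nat \<Rightarrow> real \<Rightarrow> real) \<Rightarrow> nat \<Rightarrow> bool" where
  "AG_sub n Isum blk f g gu i \<longleftrightarrow>
    (\<forall>w u. Linf w \<and> Linf u \<longrightarrow>
       (\<forall>x0. blkv blk i x0 = x0 \<longrightarrow> (\<exists>xi. sub_solution blk f i w u xi \<and> xi 0 = x0)) \<and>
       (\<forall>xi xi'. sub_solution blk f i w u xi \<and> sub_solution blk f i w u xi' \<and> xi 0 = xi' 0
            \<longrightarrow> (\<forall>t\<ge>0. xi t = xi' t)) \<and>
       (\<forall>xi. sub_solution blk f i w u xi \<longrightarrow>
          Limsup at_top (\<lambda>t. ereal (norm (xi t))) \<le>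
            ereal (if i \<in> Isum
                   then (\<Sum>j<n. g i j (linf_norm (\<lambda>t. blkv blk j (w t)))) + gu i (linf_norm u)
                   else max (Max ((\<lambda>j. g i j (linf_norm (\<lambda>t. blkv blk j (w t)))) ` {..<n}))
                            (gu i (linf_norm u)))))"

end

theory Submission
  imports Defs
begin

text \<open>
  Let \<open>l\<^sub>i\<close> be the limsup of \<open>|x\<^sub>i(t)|\<close> along a solution; it is finite because solutions are
  bounded. Applying the AG property of subsystem \<open>i\<close> to the tail of the solution, where the
  other blocks act as inputs of sup norm at most \<open>l\<^sub>j + \<epsilon>\<close>, and letting \<open>\<epsilon> \<rightarrow> 0\<close> gives
  \<open>l \<le> \<Gamma>(l) + b\<close> componentwise (in the mixed sum/max sense), where \<open>b = \<Sum>\<^sub>i \<gamma>\<^sub>i(\<parallel>u\<parallel>)\<close>.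
  The small-gain condition turns this into an explicit bound: with \<open>b\<^sub>0 = b\<close>,
  \<open>T\<^sub>k = b\<^sub>k + \<alpha>\<^sup>-\<^sup>1(b\<^sub>k)\<close> and \<open>b\<^sub>k\<^sub>+\<^sub>1 = b\<^sub>k + \<Sum>\<^sub>i\<^sub>j \<gamma>\<^sub>i\<^sub>j(T\<^sub>k)\<close>, the set of blocks with \<open>l\<^sub>i > T\<^sub>k\<close>
  shrinks strictly until it is empty, so \<open>l\<^sub>i \<le> T\<^sub>n\<close>, a nondecreasing continuous function of
  \<open>\<parallel>u\<parallel>\<close>. Summing over the blocks and adding \<open>\<parallel>u\<parallel>\<close> makes it strictly increasing.
\<close>

section \<open>Comparison functions\<close>

definition class_K_weak :: "(real \<Rightarrow> real) \<Rightarrow> bool" where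
  "class_K_weak g \<longleftrightarrow> continuous_on {0..} g \<and> mono_on {0..} g \<and> g 0 = 0"

lemma class_K_weakD:
  assumes "class_K_weak g"
  shows "continuous_on {0..} g" "g 0 = 0" "\<And>a b. 0 \<le> a \<Longrightarrow> a \<le> b \<Longrightarrow> g a \<le> g b"
    "\<And>a. 0 \<le> a \<Longrightarrow> 0 \<le> g a"
proof -
  show "continuous_on {0..} g" "g 0 = 0" using assms unfolding class_K_weak_def by auto
  show mono: "g a \<le> g b" if "0 \<le> a" "a \<le> b" for a b
    using assms that unfolding class_K_weak_def by (auto intro: mono_onD)
  show "0 \<le> g a" if "0 \<le> a" for a
    using mono[OF order_refl that] \<open>g 0 = 0\<close> by simp
qed

lemma class_K_imp_weak: "class_K g \<Longrightarrow> class_K_weak g"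
  unfolding class_K_def class_K_weak_def by (auto intro: strict_mono_on_imp_mono_on)

lemma class_K0_imp_weak:
  assumes "class_K0 g"
  shows "class_K_weak g"
  using assms unfolding class_K0_def
proof
  assume zero: "\<forall>s\<ge>0. g s = 0"
  have "continuous_on {0..} g"
    using continuous_on_const[of "{0..}" 0] by (rule continuous_on_cong[THEN iffD1, rotated 2]) (use zero in auto)
  then show ?thesis unfolding class_K_weak_def using zero by (auto intro: mono_onI)
qed (rule class_K_imp_weak)

lemma class_K_weak_id: "class_K_weak (\<lambda>x. x)"
  unfolding class_K_weak_def by (auto intro: mono_onI)

lemma class_K_weak_add:
  assumes "class_K_weak f" "class_K_weak g"
  shows "class_K_weak (\<lambda>x. f x + g x)"
proof -
  note f = class_K_weakD[OF assms(1)] and g = class_K_weakD[OF assms(2)]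
  show ?thesis unfolding class_K_weak_def
    by (intro conjI continuous_on_add f(1) g(1) mono_onI add_mono) (auto simp: f(2) g(2) intro: f(3) g(3))
qed

lemma class_K_weak_scale:
  assumes "0 \<le> c" "class_K_weak f"
  shows "class_K_weak (\<lambda>x. c * f x)"
proof -
  note f = class_K_weakD[OF assms(2)]
  show ?thesis unfolding class_K_weak_def
    by (intro conjI continuous_on_mult_left f(1) mono_onI mult_left_mono assms(1))
      (auto simp: f(2) intro: f(3))
qed

lemma class_K_weak_sum:
  "finite A \<Longrightarrow> (\<And>a. a \<in> A \<Longrightarrow> class_K_weak (f a)) \<Longrightarrow> class_K_weak (\<lambda>x. \<Sum>a\<in>A. f a x)"
proof (induction A rule: finite_induct)
  case empty
  show ?case by (simp add: class_K_weak_def mono_on_def)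
next
  case (insert a A)
  then show ?case by (simp add: class_K_weak_add)
qed

lemma class_K_weak_compose:
  assumes "class_K_weak f" "class_K_weak g"
  shows "class_K_weak (\<lambda>x. f (g x))"
proof -
  note f = class_K_weakD[OF assms(1)] and g = class_K_weakD[OF assms(2)]
  have "continuous_on {0..} (\<lambda>x. f (g x))"
    by (rule continuous_on_compose2[OF f(1) g(1)]) (auto intro: g(4))
  moreover have "mono_on {0..} (\<lambda>x. f (g x))"
    by (rule mono_onI) (auto intro: f(3) g(3,4))
  ultimately show ?thesis unfolding class_K_weak_def using f(2) g(2) by simp
qed

lemma class_K_weak_funpow:
  assumes "class_K_weak f"
  shows "class_K_weak (f ^^ k)"
proof (induction k)
  case 0
  show ?case using class_K_weak_id by (simp add: id_def)
next
  case (Suc k)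
  show ?case using class_K_weak_compose[OF assms Suc.IH] by (simp add: comp_def)
qed

lemma class_K_weak_max:
  assumes "class_K_weak g" "0 \<le> a" "0 \<le> b"
  shows "g (max a b) = max (g a) (g b)"
proof (cases "a \<le> b")
  case True
  then show ?thesis using class_K_weakD(3)[OF assms(1) assms(2)] by (simp add: max_def)
next
  case False
  then show ?thesis using class_K_weakD(3)[OF assms(1) assms(3), of a] by (simp add: max_def)
qed

lemma class_K_weak_add_id:
  assumes "class_K_weak f"
  shows "class_K (\<lambda>x. f x + x)"
proof -
  note f = class_K_weakD[OF assms]
  show ?thesis unfolding class_K_def
    by (intro conjI continuous_on_add f(1) continuous_on_id strict_mono_onI add_le_less_mono)
      (auto simp: f(2) intro: f(3))
qed

lemma class_K_image_atLeastAtMost: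
  assumes "class_K \<alpha>" "0 \<le> s"
  shows "\<alpha> ` {0..s} = {0..\<alpha> s}"
proof
  have sm: "strict_mono_on {0..} \<alpha>" and "\<alpha> 0 = 0" using assms(1) unfolding class_K_def by auto
  show "\<alpha> ` {0..s} \<subseteq> {0..\<alpha> s}"
  proof (rule image_subsetI)
    fix y assume "y \<in> {0..s}"
    then show "\<alpha> y \<in> {0..\<alpha> s}"
      using strict_mono_on_leD[OF sm, of 0 y] strict_mono_on_leD[OF sm, of y s] \<open>\<alpha> 0 = 0\<close> by auto
  qed
  have "continuous_on {0..s} \<alpha>"
    using assms(1) unfolding class_K_def by (auto intro: continuous_on_subset)
  then show "{0..\<alpha> s} \<subseteq> \<alpha> ` {0..s}"
    using IVT'[of \<alpha> 0 _ s] assms(2) \<open>\<alpha> 0 = 0\<close> by (fastforce simp: image_iff)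
qed

lemma class_K_inf_right_inverse:
  assumes "class_K_inf \<alpha>"
  obtains h where "class_K_weak h" "\<And>b. 0 \<le> b \<Longrightarrow> \<alpha> (h b) = b"
proof -
  have K: "class_K \<alpha>" and unb: "\<And>M. \<exists>s\<ge>0. \<alpha> s > M" using assms unfolding class_K_inf_def by auto
  have sm: "strict_mono_on {0..} \<alpha>" and cont: "continuous_on {0..} \<alpha>" and "\<alpha> 0 = 0"
    using K unfolding class_K_def by auto
  have inj: "inj_on \<alpha> {0..}" using sm by (rule strict_mono_on_imp_inj_on)
  define h where "h b = (THE y. y \<ge> 0 \<and> \<alpha> y = b)" for b
  have hb: "0 \<le> h b \<and> \<alpha> (h b) = b" if "0 \<le> b" for b
  proof -
    obtain s where "s \<ge> 0" "\<alpha> s > b" using unb by blast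
    then obtain y where y: "y \<ge> 0" "\<alpha> y = b"
      using class_K_image_atLeastAtMost[OF K, of s] \<open>0 \<le> b\<close> by (force simp: set_eq_iff image_iff)
    have "h b = y" unfolding h_def
      by (rule the_equality) (use y inj in \<open>auto simp: inj_on_def\<close>)
    then show ?thesis using y by auto
  qed
  have h_\<alpha>: "h (\<alpha> y) = y" if "y \<ge> 0" for y
    using hb[of "\<alpha> y"] inj that strict_mono_on_leD[OF sm, of 0 y] \<open>\<alpha> 0 = 0\<close>
    by (auto simp: inj_on_def)
  have mono: "mono_on {0..} h"
  proof (rule mono_onI)
    fix a b :: real assume ab: "a \<in> {0..}" "b \<in> {0..}" "a \<le> b"
    show "h a \<le> h b"
    proof (rule ccontr)
      assume "\<not> h a \<le> h b"
      then have "\<alpha> (h b) < \<alpha> (h a)" using hb ab by (intro strict_mono_onD[OF sm]) auto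
      then show False using hb ab by auto
    qed
  qed
  have "continuous (at b within {0..}) h" if b: "b \<in> {0..}" for b
  proof -
    obtain s where s: "s \<ge> 0" "\<alpha> s > b" using unb by blast
    have "continuous_on (\<alpha> ` {0..s}) h"
      by (rule continuous_on_inv) (use cont h_\<alpha> in \<open>auto intro: continuous_on_subset\<close>)
    then have "continuous (at b within {0..\<alpha> s}) h"
      using b s unfolding class_K_image_atLeastAtMost[OF K s(1)]
      by (auto simp: continuous_on_eq_continuous_within)
    moreover have "at b within {0..} = at b within {0..\<alpha> s}"
      by (rule at_within_nhd[of _ "{..<\<alpha> s}"]) (use b s in auto)
    ultimately show ?thesis by simp
  qed
  then have "continuous_on {0..} h" by (simp add: continuous_on_eq_continuous_within)
  moreover have "h 0 = 0" using h_\<alpha>[of 0] \<open>\<alpha> 0 = 0\<close> by simp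
  ultimately show ?thesis using that mono hb unfolding class_K_weak_def by blast
qed

section \<open>The mixed gain operator and the small-gain iteration\<close>

text \<open>The right-hand side of the AG estimate of subsystem \<open>i\<close>, for inputs \<open>x\<^sub>j\<close> of size
  \<open>s j\<close> and external input term \<open>c\<close>.\<close>

definition mixed_gain ::
  "nat \<Rightarrow> nat set \<Rightarrow> (nat \<Rightarrow> nat \<Rightarrow> real \<Rightarrow> real) \<Rightarrow> nat \<Rightarrow> (nat \<Rightarrow> real) \<Rightarrow> real \<Rightarrow> real" where
  "mixed_gain n Isum g i s c =
     (if i \<in> Isum then (\<Sum>j<n. g i j (s j)) + c else max (Max ((\<lambda>j. g i j (s j)) ` {..<n})) c)"

lemma Max_image_mono:
  fixes a b :: "'a \<Rightarrow> 'b::linorder"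
  assumes "finite A" "A \<noteq> {}" "\<And>j. j \<in> A \<Longrightarrow> a j \<le> b j"
  shows "Max (a ` A) \<le> Max (b ` A)"
proof (rule Max.boundedI)
  show "finite (a ` A)" "a ` A \<noteq> {}" using assms by auto
  fix y assume "y \<in> a ` A"
  then obtain j where j: "j \<in> A" "y = a j" by auto
  have "b j \<le> Max (b ` A)" using assms j by (intro Max_ge) auto
  then show "y \<le> Max (b ` A)" using assms(3)[OF j(1)] j by order
qed

lemma tendsto_Max_image:
  fixes a :: "'a \<Rightarrow> 'b \<Rightarrow> real"
  assumes "finite A" "A \<noteq> {}" "\<And>j. j \<in> A \<Longrightarrow> (a j \<longlongrightarrow> l j) F"
  shows "((\<lambda>e. Max ((\<lambda>j. a j e) ` A)) \<longlongrightarrow> Max (l ` A)) F"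
  using assms
proof (induction A rule: finite_ne_induct)
  case (insert x B)
  then show ?case by (simp, intro tendsto_max) auto
qed simp

lemma mixed_gain_mono:
  assumes gains: "\<And>j. j < n \<Longrightarrow> class_K_weak (g i j)"
    and s: "\<And>j. j < n \<Longrightarrow> 0 \<le> s j \<and> s j \<le> s' j" and "c \<le> c'"
  shows "mixed_gain n Isum g i s c \<le> mixed_gain n Isum g i s' c'"
proof -
  have le: "g i j (s j) \<le> g i j (s' j)" if "j < n" for j
    using class_K_weakD(3)[OF gains] s that by blast
  show ?thesis
  proof (cases "n = 0")
    case False
    then have "Max ((\<lambda>j. g i j (s j)) ` {..<n}) \<le> Max ((\<lambda>j. g i j (s' j)) ` {..<n})"
      by (intro Max_image_mono) (auto intro: le)
    then show ?thesis using \<open>c \<le> c'\<close> le unfolding mixed_gain_def by (auto intro: add_mono sum_mono)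
  qed (use \<open>c \<le> c'\<close> in \<open>auto simp: mixed_gain_def intro: max.mono\<close>)
qed

lemma mixed_gain_tendsto:
  assumes gains: "\<And>j. j < n \<Longrightarrow> class_K_weak (g i j)" and s: "\<And>j. j < n \<Longrightarrow> 0 \<le> s j"
  shows "((\<lambda>e. mixed_gain n Isum g i (\<lambda>j. s j + e) c) \<longlongrightarrow> mixed_gain n Isum g i s c) (at_right 0)"
proof -
  have "((\<lambda>e. g i j (s j + e)) \<longlongrightarrow> g i j (s j)) (at_right 0)" if j: "j < n" for j
  proof (rule continuous_on_tendsto_compose[OF class_K_weakD(1)[OF gains[OF j]]])
    show "((\<lambda>e. s j + e) \<longlongrightarrow> s j) (at_right 0)"
      using tendsto_add[OF tendsto_const tendsto_ident_at[of 0 "{0<..}"]] by simp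
    show "\<forall>\<^sub>F e in at_right 0. s j + e \<in> {0..}"
      using eventually_at_right_less[of "0::real"] by eventually_elim (use s[OF j] in auto)
  qed (use s[OF j] in simp)
  then have sum: "((\<lambda>e. \<Sum>j<n. g i j (s j + e)) \<longlongrightarrow> (\<Sum>j<n. g i j (s j))) (at_right 0)"
    and Max: "n \<noteq> 0 \<Longrightarrow>
      ((\<lambda>e. Max ((\<lambda>j. g i j (s j + e)) ` {..<n})) \<longlongrightarrow> Max ((\<lambda>j. g i j (s j)) ` {..<n})) (at_right 0)"
    by (auto intro: tendsto_sum tendsto_Max_image)
  show ?thesis
  proof (cases "i \<in> Isum")
    case True
    show ?thesis using tendsto_add[OF sum tendsto_const] True by (simp add: mixed_gain_def)
  next
    case False
    show ?thesis
    proof (cases "n = 0")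
      case False
      show ?thesis using tendsto_max[OF Max[OF False] tendsto_const] \<open>i \<notin> Isum\<close>
        by (simp add: mixed_gain_def)
    qed (simp add: mixed_gain_def)
  qed
qed

definition gain_sum :: "nat \<Rightarrow> (nat \<Rightarrow> nat \<Rightarrow> real \<Rightarrow> real) \<Rightarrow> real \<Rightarrow> real" where
  "gain_sum n g x = (\<Sum>i<n. \<Sum>j<n. g i j x)"

definition gain_step ::
  "nat \<Rightarrow> (nat \<Rightarrow> nat \<Rightarrow> real \<Rightarrow> real) \<Rightarrow> (real \<Rightarrow> real) \<Rightarrow> real \<Rightarrow> real" where
  "gain_step n g h b = b + gain_sum n g (b + h b)"

definition gain_level ::
  "nat \<Rightarrow> (nat \<Rightarrow> nat \<Rightarrow> real \<Rightarrow> real) \<Rightarrow> (real \<Rightarrow> real) \<Rightarrow> real \<Rightarrow> real" where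
  "gain_level n g h b = (gain_step n g h ^^ n) b + h ((gain_step n g h ^^ n) b)"

lemma class_K_weak_gain_sum:
  "(\<And>i j. i < n \<Longrightarrow> j < n \<Longrightarrow> class_K_weak (g i j)) \<Longrightarrow> class_K_weak (gain_sum n g)"
  unfolding gain_sum_def[abs_def] by (intro class_K_weak_sum) auto

lemma class_K_weak_gain_step:
  assumes "\<And>i j. i < n \<Longrightarrow> j < n \<Longrightarrow> class_K_weak (g i j)" "class_K_weak h"
  shows "class_K_weak (gain_step n g h)"
proof -
  have "class_K_weak (\<lambda>b. gain_sum n g (b + h b))"
    by (rule class_K_weak_compose[OF class_K_weak_gain_sum class_K_weak_add[OF class_K_weak_id]])
      (use assms in auto)
  then show ?thesis unfolding gain_step_def[abs_def] by (rule class_K_weak_add[OF class_K_weak_id])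
qed

lemma gain_sum_ge_row:
  assumes gains: "\<And>i j. i < n \<Longrightarrow> j < n \<Longrightarrow> class_K_weak (g i j)"
    and "0 \<le> x" "i < n"
  shows "(\<Sum>j<n. g i j x) \<le> gain_sum n g x"
  unfolding gain_sum_def using assms(3)
  by (intro member_le_sum sum_nonneg) (auto intro: class_K_weakD(4)[OF gains] \<open>0 \<le> x\<close>)

lemma gain_sum_ge_entry:
  assumes gains: "\<And>i j. i < n \<Longrightarrow> j < n \<Longrightarrow> class_K_weak (g i j)"
    and "0 \<le> x" "i < n" "j < n"
  shows "g i j x \<le> gain_sum n g x"
proof -
  have "g i j x \<le> (\<Sum>j<n. g i j x)"
    using assms(4) by (intro member_le_sum) (auto intro: class_K_weakD(4)[OF gains] assms(2,3))
  also have "\<dots> \<le> gain_sum n g x" by (rule gain_sum_ge_row[OF gains assms(2,3)])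
  finally show ?thesis .
qed

lemma gain_sum_nonneg:
  "(\<And>i j. i < n \<Longrightarrow> j < n \<Longrightarrow> class_K_weak (g i j)) \<Longrightarrow> 0 \<le> x \<Longrightarrow> 0 \<le> gain_sum n g x"
  using class_K_weakD(4)[OF class_K_weak_gain_sum] by blast

lemma class_K_weak_gain_level:
  assumes "\<And>i j. i < n \<Longrightarrow> j < n \<Longrightarrow> class_K_weak (g i j)" "class_K_weak h"
  shows "class_K_weak (gain_level n g h)"
proof -
  have "class_K_weak (gain_step n g h ^^ n)" by (intro class_K_weak_funpow class_K_weak_gain_step assms)
  then show ?thesis unfolding gain_level_def[abs_def]
    by (intro class_K_weak_add class_K_weak_compose[OF assms(2)])
qed

lemma gain_op_nonneg:
  assumes gains: "\<And>j. j < n \<Longrightarrow> class_K_weak (g i j)" and d: "\<And>j. j < n \<Longrightarrow> 0 \<le> d j"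
    and "i < n"
  shows "0 \<le> gain_op n Isum g d i"
proof -
  have nonneg: "0 \<le> g i j (d j)" if "j < n" for j
    using class_K_weakD(4)[OF gains[OF that] d[OF that]] .
  have "0 \<le> Max ((\<lambda>j. g i j (d j)) ` {..<n})"
    using nonneg[of i] \<open>i < n\<close> by (intro Max_ge_iff[THEN iffD2]) auto
  then show ?thesis
    using sum_nonneg[of "{..<n}" "\<lambda>j. g i j (d j)"] nonneg by (auto simp: gain_op_def)
qed

lemma excess_le_gain_op:
  assumes gains: "\<And>i j. i < n \<Longrightarrow> j < n \<Longrightarrow> class_K_weak (g i j)" and "i < n"
    and d: "\<And>j. j < n \<Longrightarrow> 0 \<le> d j" and "0 \<le> T" "0 \<le> b" and b': "b + gain_sum n g T \<le> b'"
    and y: "b' < y" "y \<le> mixed_gain n Isum g i (\<lambda>j. max (d j) T) b"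
  shows "(if i \<in> Isum then y - b' else y) \<le> gain_op n Isum g d i"
proof -
  note K = class_K_weakD[OF gains[OF \<open>i < n\<close>]]
  have split: "g i j (max (d j) T) = max (g i j (d j)) (g i j T)" if "j < n" for j
    using class_K_weak_max[where g="g i j", OF gains[OF \<open>i < n\<close> that] d[OF that] \<open>0 \<le> T\<close>] .
  have "0 \<le> gain_sum n g T" using gain_sum_nonneg[of n g, OF gains \<open>0 \<le> T\<close>] .
  show ?thesis
  proof (cases "i \<in> Isum")
    case True
    have "y \<le> (\<Sum>j<n. max (g i j (d j)) (g i j T)) + b"
      using y(2) True split by (simp add: mixed_gain_def)
    also have "\<dots> \<le> (\<Sum>j<n. g i j (d j) + g i j T) + b"
      by (intro add_right_mono sum_mono) (use K(4) d \<open>0 \<le> T\<close> in \<open>auto simp: max_def\<close>)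
    also have "\<dots> = (\<Sum>j<n. g i j (d j)) + (\<Sum>j<n. g i j T) + b"
      by (simp add: sum.distrib)
    also have "\<dots> \<le> (\<Sum>j<n. g i j (d j)) + b'"
      using gain_sum_ge_row[of n g, OF gains \<open>0 \<le> T\<close> \<open>i < n\<close>] b' by linarith
    finally show ?thesis using True by (simp add: gain_op_def)
  next
    case False
    have "b < y" using y(1) b' \<open>0 \<le> gain_sum n g T\<close> by linarith
    then have "y \<le> Max ((\<lambda>j. g i j (max (d j) T)) ` {..<n})"
      using y(2) False by (simp add: mixed_gain_def)
    moreover obtain j where j: "j < n"
      "Max ((\<lambda>j. g i j (max (d j) T)) ` {..<n}) = g i j (max (d j) T)"
      using Max_in[of "(\<lambda>j. g i j (max (d j) T)) ` {..<n}"] \<open>i < n\<close> by fastforce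
    moreover have "g i j T < y"
    proof -
      have "g i j T \<le> gain_sum n g T"
        by (rule gain_sum_ge_entry) (use gains \<open>0 \<le> T\<close> \<open>i < n\<close> j(1) in auto)
      then show ?thesis using b' y(1) \<open>0 \<le> b\<close> by linarith
    qed
    ultimately have "y \<le> g i j (d j)" using split[OF j(1)] by linarith
    also have "\<dots> \<le> Max ((\<lambda>j. g i j (d j)) ` {..<n})" using j(1) by (intro Max_ge) auto
    finally show ?thesis using False by (simp add: gain_op_def)
  qed
qed

text \<open>If some block exceeded \<open>T\<close>, the excess \<open>r\<close> of the blocks above \<open>T\<close> (over \<open>b'\<close> for
  sum-blocks) would satisfy \<open>r \<le> \<Gamma>(D\<^sub>\<alpha> r)\<close>, contradicting the small-gain condition.\<close>

lemma small_gain_level_set_empty: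
  fixes s :: "nat \<Rightarrow> real"
  assumes gains: "\<And>i j. i < n \<Longrightarrow> j < n \<Longrightarrow> class_K_weak (g i j)"
    and \<alpha>: "class_K_weak \<alpha>" and h: "\<And>b. 0 \<le> b \<Longrightarrow> 0 \<le> h b \<and> \<alpha> (h b) = b"
    and small_gain: "\<And>r. (\<forall>i<n. 0 \<le> r i) \<Longrightarrow> (\<exists>i<n. r i \<noteq> 0) \<Longrightarrow>
                       (\<exists>i<n. gain_op n Isum g (D_alpha Isum \<alpha> r) i < r i)"
    and s: "\<And>i. i < n \<Longrightarrow> 0 \<le> s i" "\<And>i. i < n \<Longrightarrow> s i \<le> mixed_gain n Isum g i s b"
    and "0 \<le> b" "0 \<le> T" and b': "b + gain_sum n g T \<le> b'"
    and gap: "\<And>i. i < n \<Longrightarrow> T < s i \<Longrightarrow> b' + h b' < s i"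
  shows "\<forall>i<n. s i \<le> T"
proof (rule ccontr)
  define I where "I = {i. i < n \<and> T < s i}"
  assume "\<not> (\<forall>i<n. s i \<le> T)"
  then obtain i0 where i0: "i0 \<in> I" unfolding I_def by (auto simp: not_le)
  have "0 \<le> b'" using b' gain_sum_nonneg[of n g, OF gains \<open>0 \<le> T\<close>] \<open>0 \<le> b\<close> by linarith
  then have hb': "0 \<le> h b'" "\<alpha> (h b') = b'" using h by auto
  have above: "b' + h b' < s j" if "j \<in> I" for j using gap that unfolding I_def by auto
  define r where "r j = (if j \<in> I then (if j \<in> Isum then s j - b' else s j) else 0)" for j
  define d where "d = D_alpha Isum \<alpha> r"
  have r_nonneg: "0 \<le> r j" if "j < n" for j
    using above[of j] hb' \<open>0 \<le> b'\<close> s(1)[OF that] by (auto simp: r_def)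
  have s_le_d: "s j \<le> d j" if "j \<in> I" for j
  proof (cases "j \<in> Isum")
    case True
    have "\<alpha> (h b') \<le> \<alpha> (s j - b')" using above[OF that] hb' by (intro class_K_weakD(3)[OF \<alpha>]) auto
    then show ?thesis using hb' True that by (simp add: d_def D_alpha_def r_def)
  qed (use that in \<open>simp add: d_def D_alpha_def r_def\<close>)
  have d_nonneg: "0 \<le> d j" if "j < n" for j
    using r_nonneg[OF that] class_K_weakD(4)[OF \<alpha>] by (simp add: d_def D_alpha_def)
  have s_le_max: "0 \<le> s j \<and> s j \<le> max (d j) T" if "j < n" for j
    using s_le_d[of j] s(1)[OF that] that unfolding I_def by force
  have r_le: "r i \<le> gain_op n Isum g d i" if "i < n" for i
  proof (cases "i \<in> I")
    case True
    have "mixed_gain n Isum g i s b \<le> mixed_gain n Isum g i (\<lambda>j. max (d j) T) b"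
      by (rule mixed_gain_mono) (use gains that s_le_max in auto)
    then have "s i \<le> mixed_gain n Isum g i (\<lambda>j. max (d j) T) b" using s(2)[OF that] by linarith
    moreover have "b' < s i" using above[OF True] hb' by linarith
    ultimately show ?thesis
      using excess_le_gain_op[of n g, OF gains that d_nonneg \<open>0 \<le> T\<close> \<open>0 \<le> b\<close> b'] True by (simp add: r_def)
  qed (use gain_op_nonneg[of n g, OF gains[OF that] d_nonneg that] in \<open>simp add: r_def\<close>)
  have "r i0 \<noteq> 0" using above[OF i0] hb' \<open>0 \<le> b'\<close> i0 by (auto simp: r_def)
  then obtain i where "i < n" "gain_op n Isum g d i < r i"
    using small_gain[of r] r_nonneg i0 unfolding d_def I_def by blast
  then show False using r_le by force
qed

lemma subset_chain_empty_after_card: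
  assumes "finite A" "L 0 \<subseteq> A" "\<And>k. L (Suc k) \<subseteq> L k" "\<And>k. L (Suc k) = L k \<Longrightarrow> L k = {}"
  shows "L (card A) = {}"
proof -
  have sub: "L k \<subseteq> A" for k by (induction k) (use assms(2,3) in auto)
  have card_L: "card (L k) \<le> card A - k" for k
  proof (induction k)
    case 0
    show ?case using card_mono[OF assms(1) sub] by simp
  next
    case (Suc k)
    show ?case
    proof (cases "L (Suc k) = L k")
      case True
      then show ?thesis using assms(4)[OF True] by simp
    next
      case False
      have "finite (L k)" using sub assms(1) by (rule finite_subset)
      then have "card (L (Suc k)) < card (L k)" using False assms(3)[of k] by (intro psubset_card_mono) auto
      then show ?thesis using Suc by linarith
    qed
  qed
  show ?thesis using card_L[of "card A"] finite_subset[OF sub assms(1)] by simp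
qed

lemma gain_step_ge:
  assumes "\<And>i j. i < n \<Longrightarrow> j < n \<Longrightarrow> class_K_weak (g i j)" "class_K_weak h" "0 \<le> b"
  shows "b \<le> gain_step n g h b"
  using gain_sum_nonneg[of n g, OF assms(1)] class_K_weakD(4)[OF assms(2) assms(3)] assms(3)
  unfolding gain_step_def by simp

lemma small_gain_bound:
  fixes s :: "nat \<Rightarrow> real"
  assumes gains: "\<And>i j. i < n \<Longrightarrow> j < n \<Longrightarrow> class_K_weak (g i j)"
    and \<alpha>: "class_K_weak \<alpha>" and h: "class_K_weak h" "\<And>b. 0 \<le> b \<Longrightarrow> \<alpha> (h b) = b"
    and small_gain: "\<And>r. (\<forall>i<n. 0 \<le> r i) \<Longrightarrow> (\<exists>i<n. r i \<noteq> 0) \<Longrightarrow>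
                       (\<exists>i<n. gain_op n Isum g (D_alpha Isum \<alpha> r) i < r i)"
    and s: "\<And>i. i < n \<Longrightarrow> 0 \<le> s i" "\<And>i. i < n \<Longrightarrow> s i \<le> mixed_gain n Isum g i s b"
    and "0 \<le> b" "i < n"
  shows "s i \<le> gain_level n g h b"
proof -
  note H = class_K_weakD[OF h(1)]
  define c where "c k = (gain_step n g h ^^ k) b" for k
  define T where "T k = c k + h (c k)" for k
  define L where "L k = {i. i < n \<and> T k < s i}" for k
  have c_Suc: "c (Suc k) = gain_step n g h (c k)" for k by (simp add: c_def)
  have c_ge: "b \<le> c k" for k
  proof (induction k)
    case (Suc k)
    then show ?case using gain_step_ge[where n=n and g=g and b="c k", OF gains h(1)] \<open>0 \<le> b\<close> by (simp add: c_Suc)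
  qed (simp add: c_def)
  have T_nonneg: "0 \<le> T k" for k using c_ge[of k] H(4)[of "c k"] \<open>0 \<le> b\<close> by (simp add: T_def)
  have T_mono: "T k \<le> T (Suc k)" for k
    using gain_step_ge[where n=n and g=g and b="c k", OF gains h(1)] H(3)[of "c k"] c_ge[of k] \<open>0 \<le> b\<close>
    by (simp add: T_def c_Suc add_mono)
  have L_mono: "L (Suc k) \<subseteq> L k" for k using T_mono[of k] by (auto simp: L_def)
  have L_stationary: "L k = {}" if eq: "L (Suc k) = L k" for k
  proof -
    have inv: "0 \<le> h b \<and> \<alpha> (h b) = b" if "0 \<le> b" for b using H(4) h(2) that by simp
    have step: "b + gain_sum n g (T k) \<le> c (Suc k)"
      using c_ge[of k] by (simp add: c_Suc gain_step_def T_def)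
    have gap: "T (Suc k) < s i" if "i < n" "T k < s i" for i
      using eq that unfolding L_def by blast
    have "\<forall>i<n. s i \<le> T k"
      using small_gain_level_set_empty[where n=n and g=g and Isum=Isum and b'="c (Suc k)",
          OF gains \<alpha> inv small_gain s \<open>0 \<le> b\<close> T_nonneg step] gap unfolding T_def by blast
    then show ?thesis unfolding L_def by (auto simp: not_less)
  qed
  have "L 0 \<subseteq> {..<n}" by (auto simp: L_def)
  from subset_chain_empty_after_card[OF finite_lessThan this L_mono L_stationary]
  have "L n = {}" by simp
  then show ?thesis using \<open>i < n\<close> unfolding L_def T_def c_def gain_level_def by auto
qed

section \<open>Essentially bounded inputs and block trajectories\<close>

lemma AE_lebesgue_translate:
  assumes "AE t in lebesgue. P t"
  shows "AE t in lebesgue. P (t + (a::real))"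
proof -
  obtain N where N: "{x \<in> space lebesgue. \<not> P x} \<subseteq> N" "emeasure lebesgue N = 0" "N \<in> sets lebesgue"
    using assms by (rule AE_E)
  define N' where "N' = (\<lambda>x. - a + x) ` N"
  have "emeasure lebesgue N' = 0"
    unfolding N'_def using emeasure_lebesgue_affine[of "1::real" "-a" N] N by (simp add: add.commute)
  moreover have "N' \<in> sets lebesgue" unfolding N'_def by (rule lebesgue_sets_translation[OF N(3)])
  moreover have "{x \<in> space lebesgue. \<not> P (x + a)} \<subseteq> N'"
  proof
    fix x assume "x \<in> {x \<in> space lebesgue. \<not> P (x + a)}"
    then have "x + a \<in> N" using N(1) by auto
    then show "x \<in> N'" unfolding N'_def by (auto intro!: image_eqI[where x="x+a"])
  qed
  ultimately show ?thesis by (intro AE_I)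
qed

lemma measurable_translate_nonneg:
  assumes "u \<in> borel_measurable (restrict_space lebesgue {0..})" "0 \<le> (a::real)"
  shows "(\<lambda>t. u (t + a)) \<in> borel_measurable (restrict_space lebesgue {0..})"
proof -
  have "(\<lambda>x. a + 1 * x) \<in> lebesgue \<rightarrow>\<^sub>M lebesgue"
    using lebesgue_affine_measurable[where c= "\<lambda>x::real. 1" and t=a] by simp
  then have "(\<lambda>x. x + a) \<in> lebesgue \<rightarrow>\<^sub>M lebesgue" by (simp add: add.commute)
  then have "(\<lambda>x. x + a) \<in> restrict_space lebesgue {0..} \<rightarrow>\<^sub>M restrict_space lebesgue {0..}"
    by (rule measurable_restrict_space3) (use assms in auto)
  then show ?thesis using assms(1) by (rule measurable_compose)
qed

lemma ae_filter_lebesgue_nonneg_neq_bot: "ae_filter (restrict_space lebesgue {0::real..}) \<noteq> bot"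
proof -
  have "emeasure lebesgue {0::real..1} \<le> emeasure lebesgue {0::real..}"
    by (intro emeasure_mono) auto
  then have "emeasure lebesgue {0::real..} \<noteq> 0" by auto
  then show ?thesis by (simp add: ae_filter_eq_bot_iff emeasure_restrict_space)
qed

lemma esssup_norm_nonneg:
  fixes v :: "real \<Rightarrow> 'a::real_normed_vector"
  shows "0 \<le> esssup (restrict_space lebesgue {0..}) (\<lambda>t. ereal (norm (v t)))"
proof (cases "(\<lambda>t. ereal (norm (v t))) \<in> borel_measurable (restrict_space lebesgue {0..})")
  case True
  then show ?thesis using ae_filter_lebesgue_nonneg_neq_bot
    unfolding esssup_def by (auto intro!: le_Limsup)
qed (simp add: esssup_non_measurable)

lemma linf_norm_nonneg: "0 \<le> linf_norm v"
  unfolding linf_norm_def using esssup_norm_nonneg by (rule real_of_ereal_pos)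

lemma linf_norm_le:
  fixes v :: "real \<Rightarrow> 'a::euclidean_space"
  assumes "v \<in> borel_measurable (restrict_space lebesgue {0..})"
    and "\<And>t. 0 \<le> t \<Longrightarrow> norm (v t) \<le> c" "0 \<le> c"
  shows "linf_norm v \<le> c"
proof -
  have "(\<lambda>t. ereal (norm (v t))) \<in> borel_measurable (restrict_space lebesgue {0..})"
    using assms(1) by measurable
  then have "esssup (restrict_space lebesgue {0..}) (\<lambda>t. ereal (norm (v t))) \<le> ereal c"
    by (rule esssup_I) (use assms(2) in \<open>auto simp: space_restrict_space\<close>)
  then show ?thesis unfolding linf_norm_def using assms(3)
    by (cases "esssup (restrict_space lebesgue {0..}) (\<lambda>t. ereal (norm (v t)))") auto
qed

lemma Linf_translate:
  fixes u :: "real \<Rightarrow> 'a::euclidean_space"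
  assumes "Linf u" "0 \<le> a"
  shows "Linf (\<lambda>t. u (t + a))"
proof -
  obtain B where "AE t in lebesgue. 0 \<le> t \<longrightarrow> norm (u t) \<le> B" using assms(1) unfolding Linf_def by auto
  from AE_lebesgue_translate[OF this, of a]
  have "AE t in lebesgue. 0 \<le> t \<longrightarrow> norm (u (t + a)) \<le> B"
    by eventually_elim (use assms(2) in auto)
  then show ?thesis
    using measurable_translate_nonneg assms unfolding Linf_def by blast
qed

lemma linf_norm_translate_le:
  fixes u :: "real \<Rightarrow> 'a::euclidean_space"
  assumes "Linf u" "0 \<le> a"
  shows "linf_norm (\<lambda>t. u (t + a)) \<le> linf_norm u"
proof -
  let ?M = "restrict_space lebesgue {0::real..}"
  have um: "u \<in> borel_measurable ?M" using assms(1) unfolding Linf_def by auto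
  obtain B where B: "AE t in lebesgue. 0 \<le> t \<longrightarrow> norm (u t) \<le> B"
    using assms(1) unfolding Linf_def by auto
  have sm: "(\<lambda>t. ereal (norm (u (t + a)))) \<in> borel_measurable ?M"
    using measurable_translate_nonneg[OF um assms(2)] by measurable
  define E where "E = esssup ?M (\<lambda>t. ereal (norm (u t)))"
  have "AE t in ?M. ereal (norm (u t)) \<le> E" unfolding E_def by (rule esssup_AE)
  then have "AE t in lebesgue. t \<in> {0..} \<longrightarrow> ereal (norm (u t)) \<le> E"
    by (subst (asm) AE_restrict_space_iff) auto
  from AE_lebesgue_translate[OF this, of a]
  have "AE t in ?M. ereal (norm (u (t + a))) \<le> E"
    by (subst AE_restrict_space_iff) (auto elim: eventually_mono simp: assms(2))
  then have shifted: "esssup ?M (\<lambda>t. ereal (norm (u (t + a)))) \<le> E" by (rule esssup_I[OF sm])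
  have "AE t in ?M. ereal (norm (u t)) \<le> ereal B"
    using B by (subst AE_restrict_space_iff) (auto elim: eventually_mono)
  moreover have "(\<lambda>t. ereal (norm (u t))) \<in> borel_measurable ?M" using um by measurable
  ultimately have "E \<le> ereal B" unfolding E_def by (intro esssup_I)
  then show ?thesis
    unfolding linf_norm_def E_def[symmetric] using shifted esssup_norm_nonneg[of "\<lambda>t. u (t + a)"]
    by (cases E; cases "esssup ?M (\<lambda>t. ereal (norm (u (t + a))))") auto
qed

lemma Linf_continuous_bounded:
  fixes v :: "real \<Rightarrow> 'a::euclidean_space"
  assumes "continuous_on {0..} v" "\<And>t. 0 \<le> t \<Longrightarrow> norm (v t) \<le> C"
  shows "Linf v" "v \<in> borel_measurable (restrict_space lebesgue {0..})"
proof -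
  show m: "v \<in> borel_measurable (restrict_space lebesgue {0..})"
    by (rule continuous_imp_measurable_on_sets_lebesgue[OF assms(1)]) auto
  show "Linf v" unfolding Linf_def using m assms(2) by (auto intro!: AE_I2)
qed

lemma bounded_linear_blkv: "bounded_linear (blkv blk i)"
  by (auto simp: linear_iff blkv_def vec_eq_iff intro: linear_conv_bounded_linear[THEN iffD1])

lemma blkv_blkv [simp]: "blkv blk i (blkv blk i x) = blkv blk i x"
  by (simp add: blkv_def vec_eq_iff)

lemma merge_blk_blkv [simp]: "merge_blk blk i (blkv blk i x) x = x"
  by (simp add: merge_blk_def)

lemma norm_blkv_le: "norm (blkv blk i x) \<le> norm x"
  by (rule norm_le_componentwise_cart) (simp add: blkv_def)

lemma sum_blkv:
  assumes "range blk \<subseteq> A" "finite A"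
  shows "(\<Sum>i\<in>A. blkv blk i x) = x"
proof -
  have "(\<Sum>i\<in>A. blkv blk i x) $ k = x $ k" for k
  proof -
    have "(\<Sum>i\<in>A. blkv blk i x) $ k = (\<Sum>i\<in>A. if blk k = i then x $ k else 0)"
      unfolding sum_component by (simp add: blkv_def)
    also have "\<dots> = x $ k" using assms by (simp add: sum.delta' subset_iff)
    finally show ?thesis .
  qed
  then show ?thesis by (simp add: vec_eq_iff)
qed

lemma sys_solution_translate:
  assumes sol: "sys_solution f u x" and "0 \<le> \<tau>"
  shows "sys_solution f (\<lambda>t. u (t + \<tau>)) (\<lambda>t. x (t + \<tau>))"
proof -
  let ?F = "\<lambda>s. f (x s) (u s)"
  have xc: "continuous_on {0..} x" and xi: "\<And>t. 0 \<le> t \<Longrightarrow> (?F has_integral (x t - x 0)) {0..t}"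
    using sol unfolding sys_solution_def by auto
  have "continuous_on {0..} (\<lambda>t. x (t + \<tau>))"
    by (rule continuous_on_compose2[OF xc]) (auto intro!: continuous_intros simp: \<open>0 \<le> \<tau>\<close>)
  moreover have "((\<lambda>s. f (x (s + \<tau>)) (u (s + \<tau>))) has_integral (x (t + \<tau>) - x \<tau>)) {0..t}"
    if "0 \<le> t" for t
  proof -
    have I1: "(?F has_integral (x (t + \<tau>) - x 0)) {0..t + \<tau>}" using xi that \<open>0 \<le> \<tau>\<close> by auto
    have I2: "(?F has_integral (x \<tau> - x 0)) {0..\<tau>}" using xi \<open>0 \<le> \<tau>\<close> by auto
    have "?F integrable_on {\<tau>..t + \<tau>}"
      using integrable_subinterval_real[OF has_integral_integrable[OF I1]] \<open>0 \<le> \<tau>\<close> by auto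
    then have I3: "(?F has_integral integral {\<tau>..t + \<tau>} ?F) {\<tau>..t + \<tau>}" by auto
    have "(?F has_integral (x \<tau> - x 0 + integral {\<tau>..t + \<tau>} ?F)) {0..t + \<tau>}"
      by (rule has_integral_combine[OF \<open>0 \<le> \<tau>\<close> _ I2 I3]) (use that in auto)
    then have "x \<tau> - x 0 + integral {\<tau>..t + \<tau>} ?F = x (t + \<tau>) - x 0"
      using I1 by (rule has_integral_unique)
    then have "integral {\<tau>..t + \<tau>} ?F = x (t + \<tau>) - x \<tau>" by (simp add: algebra_simps)
    then have "(?F has_integral (x (t + \<tau>) - x \<tau>)) {0 + \<tau>..t + \<tau>}" using I3 by simp
    then have "((?F \<circ> (+) \<tau>) has_integral (x (t + \<tau>) - x \<tau>)) {0..t}"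
      by (subst has_integral_shift_Icc_real)
    then show ?thesis by (simp add: o_def add.commute)
  qed
  ultimately show ?thesis unfolding sys_solution_def by simp
qed

lemma sys_solution_imp_sub_solution:
  assumes "sys_solution f u x"
  shows "sub_solution blk f i x u (\<lambda>t. blkv blk i (x t))"
proof -
  have "continuous_on {0..} x" and
    int: "\<And>t. 0 \<le> t \<Longrightarrow> ((\<lambda>s. f (x s) (u s)) has_integral (x t - x 0)) {0..t}"
    using assms unfolding sys_solution_def by auto
  then have "continuous_on {0..} (\<lambda>t. blkv blk i (x t))"
    using bounded_linear.continuous_on[OF bounded_linear_blkv] by blast
  moreover have "((\<lambda>s. blkv blk i (f (x s) (u s))) has_integral blkv blk i (x t - x 0)) {0..t}"
    if "0 \<le> t" for t
    using has_integral_linear[OF int[OF that] bounded_linear_blkv] by (simp add: o_def)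
  ultimately show ?thesis unfolding sub_solution_def
    by (simp add: linear_diff[OF bounded_linear.linear[OF bounded_linear_blkv]])
qed

section \<open>Asymptotic gain of the interconnection\<close>

lemma Limsup_at_top_translate_le:
  fixes f :: "real \<Rightarrow> ereal"
  assumes "Limsup at_top (\<lambda>t. f (t + a)) \<le> C"
  shows "Limsup at_top f \<le> C"
  unfolding Limsup_le_iff
proof (intro allI impI)
  fix y assume "C < y"
  then have "eventually (\<lambda>t. f (t + a) < y) at_top" using assms by (intro Limsup_lessD) simp
  then obtain N where N: "\<And>t. t \<ge> N \<Longrightarrow> f (t + a) < y" by (auto simp: eventually_at_top_linorder)
  show "eventually (\<lambda>t. f t < y) at_top" unfolding eventually_at_top_linorder
    using N[of "_ - a"] by (intro exI[of _ "N + a"]) (auto simp: algebra_simps)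
qed

lemma AG_sub_Limsup_le:
  assumes AG: "AG_sub n Isum blk f g gu i"
    and gains: "\<And>j. j < n \<Longrightarrow> class_K_weak (g i j)" and gain_u: "class_K_weak (gu i)"
    and sol: "sys_solution f u x" and u: "Linf u" and bdd: "\<And>t. 0 \<le> t \<Longrightarrow> norm (x t) \<le> C"
    and "0 \<le> \<tau>" and tail: "\<And>t j. \<tau> \<le> t \<Longrightarrow> j < n \<Longrightarrow> norm (blkv blk j (x t)) \<le> l j"
  shows "Limsup at_top (\<lambda>t. ereal (norm (blkv blk i (x t))))
           \<le> ereal (mixed_gain n Isum g i l (gu i (linf_norm u)))"
proof -
  define w where "w t = x (t + \<tau>)" for t
  define v where "v t = u (t + \<tau>)" for t
  have sol_w: "sys_solution f v w"
    unfolding w_def v_def by (rule sys_solution_translate[OF sol \<open>0 \<le> \<tau>\<close>])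
  have w_bdd: "norm (w t) \<le> C" if "0 \<le> t" for t using bdd \<open>0 \<le> \<tau>\<close> that by (simp add: w_def)
  have wc: "continuous_on {0..} w" using sol_w unfolding sys_solution_def by simp
  have "Linf v" unfolding v_def by (rule Linf_translate[OF u \<open>0 \<le> \<tau>\<close>])
  moreover have "Linf w" by (rule Linf_continuous_bounded(1)[OF wc w_bdd])
  ultimately have AG_w: "Limsup at_top (\<lambda>t. ereal (norm (blkv blk i (w t)))) \<le>
      ereal (mixed_gain n Isum g i (\<lambda>j. linf_norm (\<lambda>t. blkv blk j (w t))) (gu i (linf_norm v)))"
    using AG sys_solution_imp_sub_solution[OF sol_w] unfolding AG_sub_def mixed_gain_def by blast
  have block_norm: "0 \<le> linf_norm (\<lambda>t. blkv blk j (w t)) \<and> linf_norm (\<lambda>t. blkv blk j (w t)) \<le> l j"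
    if "j < n" for j
  proof -
    have "continuous_on {0..} (\<lambda>t. blkv blk j (w t))"
      using bounded_linear.continuous_on[OF bounded_linear_blkv wc] .
    then have "(\<lambda>t. blkv blk j (w t)) \<in> borel_measurable (restrict_space lebesgue {0..})"
      by (rule Linf_continuous_bounded(2)[where C=C]) (use order_trans[OF norm_blkv_le w_bdd] in simp)
    moreover have "norm (blkv blk j (w t)) \<le> l j" if "0 \<le> t" for t
      using tail[of "t + \<tau>" j] \<open>j < n\<close> that by (simp add: w_def)
    ultimately show ?thesis
      using linf_norm_nonneg linf_norm_le order_trans[OF norm_ge_zero] by blast
  qed
  have "gu i (linf_norm v) \<le> gu i (linf_norm u)"
    unfolding v_def using class_K_weakD(3)[OF gain_u linf_norm_nonneg linf_norm_translate_le[OF u \<open>0 \<le> \<tau>\<close>]] .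
  then have "mixed_gain n Isum g i (\<lambda>j. linf_norm (\<lambda>t. blkv blk j (w t))) (gu i (linf_norm v))
      \<le> mixed_gain n Isum g i l (gu i (linf_norm u))"
    by (intro mixed_gain_mono gains block_norm)
  with AG_w have "Limsup at_top (\<lambda>t. ereal (norm (blkv blk i (x (t + \<tau>)))))
      \<le> ereal (mixed_gain n Isum g i l (gu i (linf_norm u)))"
    unfolding w_def by (meson ereal_less_eq(3) order_trans)
  then show ?thesis by (rule Limsup_at_top_translate_le)
qed

lemma block_Limsup_gain_inequality:
  assumes AG: "\<And>i. i < n \<Longrightarrow> AG_sub n Isum blk f g gu i"
    and gains: "\<And>i j. i < n \<Longrightarrow> j < n \<Longrightarrow> class_K_weak (g i j)"
    and gains_u: "\<And>i. i < n \<Longrightarrow> class_K_weak (gu i)"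
    and sol: "sys_solution f u x" and u: "Linf u" and bdd: "\<And>t. 0 \<le> t \<Longrightarrow> norm (x t) \<le> C"
  obtains l where "\<And>i. 0 \<le> l i"
    "\<And>i. Limsup at_top (\<lambda>t. ereal (norm (blkv blk i (x t)))) = ereal (l i)"
    "\<And>i. i < n \<Longrightarrow> l i \<le> mixed_gain n Isum g i l (gu i (linf_norm u))"
proof -
  define l where "l i = real_of_ereal (Limsup at_top (\<lambda>t. ereal (norm (blkv blk i (x t)))))" for i
  have block_bdd: "norm (blkv blk i (x t)) \<le> C" if "0 \<le> t" for i t
    using order_trans[OF norm_blkv_le bdd[OF that]] .
  have lim: "Limsup at_top (\<lambda>t. ereal (norm (blkv blk i (x t)))) = ereal (l i)" "0 \<le> l i" for i
  proof -
    have "\<forall>\<^sub>F t in at_top. ereal (norm (blkv blk i (x t))) \<le> ereal C"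
      using eventually_ge_at_top[of "0::real"] by eventually_elim (simp add: block_bdd)
    then have "Limsup at_top (\<lambda>t. ereal (norm (blkv blk i (x t)))) \<le> ereal C" by (rule Limsup_bounded)
    moreover have "0 \<le> Limsup at_top (\<lambda>t. ereal (norm (blkv blk i (x t))))" by (intro le_Limsup) auto
    ultimately show "Limsup at_top (\<lambda>t. ereal (norm (blkv blk i (x t)))) = ereal (l i)" "0 \<le> l i"
      unfolding l_def by (cases "Limsup at_top (\<lambda>t. ereal (norm (blkv blk i (x t))))"; simp)+
  qed
  have approx: "l i \<le> mixed_gain n Isum g i (\<lambda>j. l j + \<epsilon>) (gu i (linf_norm u))"
    if "i < n" "0 < \<epsilon>" for i \<epsilon>
  proof -
    have "eventually (\<lambda>t. norm (blkv blk j (x t)) < l j + \<epsilon>) at_top" for j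
    proof -
      have "Limsup at_top (\<lambda>t. ereal (norm (blkv blk j (x t)))) < ereal (l j + \<epsilon>)"
        using lim(1)[of j] \<open>0 < \<epsilon>\<close> by simp
      from Limsup_lessD[OF this] show ?thesis by simp
    qed
    then have "eventually (\<lambda>t. \<forall>j\<in>{..<n}. norm (blkv blk j (x t)) < l j + \<epsilon>) at_top"
      by (intro eventually_ball_finite) auto
    then obtain N where N: "\<And>t j. N \<le> t \<Longrightarrow> j < n \<Longrightarrow> norm (blkv blk j (x t)) < l j + \<epsilon>"
      unfolding eventually_at_top_linorder by blast
    have "Limsup at_top (\<lambda>t. ereal (norm (blkv blk i (x t))))
        \<le> ereal (mixed_gain n Isum g i (\<lambda>j. l j + \<epsilon>) (gu i (linf_norm u)))"
    proof (rule AG_sub_Limsup_le[OF AG[OF \<open>i < n\<close>] gains[OF \<open>i < n\<close>] gains_u[OF \<open>i < n\<close>] sol u bdd])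
      show "0 \<le> max N 0" by simp
      show "norm (blkv blk j (x t)) \<le> l j + \<epsilon>" if "max N 0 \<le> t" "j < n" for t j
        using N[of t j] that by simp
    qed
    then show ?thesis using lim(1)[of i] by simp
  qed
  have gain_ineq: "l i \<le> mixed_gain n Isum g i l (gu i (linf_norm u))" if "i < n" for i
  proof (rule tendsto_lowerbound)
    show "((\<lambda>\<epsilon>. mixed_gain n Isum g i (\<lambda>j. l j + \<epsilon>) (gu i (linf_norm u)))
        \<longlongrightarrow> mixed_gain n Isum g i l (gu i (linf_norm u))) (at_right 0)"
      by (rule mixed_gain_tendsto) (use gains that lim(2) in auto)
    show "\<forall>\<^sub>F \<epsilon> in at_right 0. l i \<le> mixed_gain n Isum g i (\<lambda>j. l j + \<epsilon>) (gu i (linf_norm u))"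
      using eventually_at_right_less[of "0::real"] by eventually_elim (rule approx[OF that])
  qed simp
  show thesis by (rule that[OF lim(2) lim(1) gain_ineq])
qed

lemma Limsup_norm_le_sum_blocks:
  assumes blocks: "range blk \<subseteq> {..<n}"
    and l: "\<And>i. i < n \<Longrightarrow> Limsup at_top (\<lambda>t. ereal (norm (blkv blk i (x t)))) \<le> ereal (l i)"
  shows "Limsup at_top (\<lambda>t. ereal (norm (x t))) \<le> ereal (\<Sum>i<n. l i)"
  unfolding Limsup_le_iff
proof (intro allI impI)
  fix y :: ereal assume y: "ereal (\<Sum>i<n. l i) < y"
  show "\<forall>\<^sub>F t in at_top. ereal (norm (x t)) < y"
  proof (cases y)
    case (real y')
    have "0 < n" using blocks by (metis lessThan_iff not_less_zero rangeI subsetD zero_less_iff_neq_zero)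
    define \<delta> where "\<delta> = (y' - (\<Sum>i<n. l i)) / real n"
    have "0 < \<delta>" unfolding \<delta>_def using y real \<open>0 < n\<close> by simp
    have "\<forall>\<^sub>F t in at_top. norm (blkv blk i (x t)) < l i + \<delta>" if "i < n" for i
    proof -
      have "Limsup at_top (\<lambda>t. ereal (norm (blkv blk i (x t)))) < ereal (l i + \<delta>)"
        using le_less_trans[OF l[OF that]] \<open>0 < \<delta>\<close> by simp
      from Limsup_lessD[OF this] show ?thesis by simp
    qed
    then have "\<forall>\<^sub>F t in at_top. \<forall>i\<in>{..<n}. norm (blkv blk i (x t)) < l i + \<delta>"
      by (intro eventually_ball_finite) auto
    then show ?thesis
    proof eventually_elim
      case (elim t)
      have "norm (x t) = norm (\<Sum>i<n. blkv blk i (x t))" using sum_blkv[OF blocks] by simp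
      also have "\<dots> \<le> (\<Sum>i<n. norm (blkv blk i (x t)))" by (rule norm_sum)
      also have "\<dots> < (\<Sum>i<n. l i + \<delta>)" by (rule sum_strict_mono) (use elim \<open>0 < n\<close> in auto)
      also have "\<dots> = y'" unfolding \<delta>_def sum.distrib using \<open>0 < n\<close> by simp
      finally show ?case using real by simp
    qed
  qed (use y in auto)
qed

lemma interconnection_Limsup_le:
  assumes blocks: "range blk \<subseteq> {..<n}"
    and gains: "\<And>i j. i < n \<Longrightarrow> j < n \<Longrightarrow> class_K_weak (g i j)"
    and gains_u: "\<And>i. i < n \<Longrightarrow> class_K_weak (gu i)"
    and AG: "\<And>i. i < n \<Longrightarrow> AG_sub n Isum blk f g gu i"
    and \<alpha>: "class_K_weak \<alpha>" and h: "class_K_weak h" "\<And>b. 0 \<le> b \<Longrightarrow> \<alpha> (h b) = b"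
    and small_gain: "\<And>r. (\<forall>i<n. 0 \<le> r i) \<Longrightarrow> (\<exists>i<n. r i \<noteq> 0) \<Longrightarrow>
                       (\<exists>i<n. gain_op n Isum g (D_alpha Isum \<alpha> r) i < r i)"
    and sol: "sys_solution f u x" and u: "Linf u" and bdd: "\<And>t. 0 \<le> t \<Longrightarrow> norm (x t) \<le> C"
  shows "Limsup at_top (\<lambda>t. ereal (norm (x t)))
           \<le> ereal (real n * gain_level n g h (\<Sum>i<n. gu i (linf_norm u)))"
proof -
  define b where "b = (\<Sum>i<n. gu i (linf_norm u))"
  obtain l where l: "\<And>i. 0 \<le> l i" "\<And>i. Limsup at_top (\<lambda>t. ereal (norm (blkv blk i (x t)))) = ereal (l i)"
    "\<And>i. i < n \<Longrightarrow> l i \<le> mixed_gain n Isum g i l (gu i (linf_norm u))"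
    using block_Limsup_gain_inequality[OF AG gains gains_u sol u bdd] by blast
  have gu_le: "gu i (linf_norm u) \<le> b" if "i < n" for i
    unfolding b_def using that class_K_weakD(4)[OF gains_u linf_norm_nonneg]
    by (intro member_le_sum) auto
  have "0 \<le> b" unfolding b_def using class_K_weakD(4)[OF gains_u linf_norm_nonneg]
    by (intro sum_nonneg) auto
  have l_le: "l i \<le> mixed_gain n Isum g i l b" if "i < n" for i
  proof -
    have "mixed_gain n Isum g i l (gu i (linf_norm u)) \<le> mixed_gain n Isum g i l b"
      by (rule mixed_gain_mono) (use gains that l(1) gu_le in auto)
    then show ?thesis using l(3)[OF that] by linarith
  qed
  have "l i \<le> gain_level n g h b" if "i < n" for i
    by (rule small_gain_bound[where \<alpha>=\<alpha> and Isum=Isum])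
      (fact gains \<alpha> h small_gain | use l(1) l_le \<open>0 \<le> b\<close> that in auto)+
  then have "(\<Sum>i<n. l i) \<le> real n * gain_level n g h b"
    using sum_mono[of "{..<n}" l "\<lambda>_. gain_level n g h b"] by simp
  moreover have "Limsup at_top (\<lambda>t. ereal (norm (x t))) \<le> ereal (\<Sum>i<n. l i)"
    using Limsup_norm_le_sum_blocks[OF blocks, of x l] l(2) by simp
  ultimately show ?thesis unfolding b_def by (simp add: order_trans)
qed

theorem theorem2:
  fixes n :: nat and Isum :: "nat set"
    and blk :: "'n::finite \<Rightarrow> nat" and ublk :: "'m::finite \<Rightarrow> nat"
    and f :: "real^'n \<Rightarrow> real^'m \<Rightarrow> real^'n"
    and g :: "nat \<Rightarrow> nat \<Rightarrow> real \<Rightarrow> real" and gu :: "nat \<Rightarrow> real \<Rightarrow> real"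
    and \<alpha> :: "real \<Rightarrow> real"
  assumes blocks: "range blk = {..<n}" "range ublk = {..<n}"
    and partition: "Isum \<subseteq> {..<n}"
    and f_cont: "continuous_on UNIV (\<lambda>(x, u). f x u)"
    and f_lip: "\<And>r x0. \<exists>\<delta>>0. \<exists>L. \<forall>x\<in>ball x0 \<delta>. \<forall>y\<in>ball x0 \<delta>. \<forall>u.
                   norm u \<le> r \<longrightarrow> norm (f x u - f y u) \<le> L * norm (x - y)"
    and f_ui: "\<And>i x u u'. i < n \<Longrightarrow> (\<forall>k. ublk k = i \<longrightarrow> u $ k = u' $ k) \<Longrightarrow>
                   blkv blk i (f x u) = blkv blk i (f x u')"
    and gains: "\<And>i j. i < n \<Longrightarrow> j < n \<Longrightarrow> class_K0 (g i j)"
    and gains_u: "\<And>i. i < n \<Longrightarrow> class_K0 (gu i)"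
    and gain_diag: "\<And>i s. i < n \<Longrightarrow> 0 \<le> s \<Longrightarrow> g i i s = 0"
    and AG: "\<And>i. i < n \<Longrightarrow> AG_sub n Isum blk f g gu i"
    and exist: "\<And>x0 u. Linf u \<Longrightarrow> \<exists>x. sys_solution f u x \<and> x 0 = x0"
    and unif_bdd: "\<And>r. \<exists>C. \<forall>x u. Linf u \<and> linf_norm u \<le> r \<and> sys_solution f u x \<and> norm (x 0) \<le> r
                     \<longrightarrow> (\<forall>t\<ge>0. norm (x t) \<le> C)"
    and small_gain: "class_K_inf \<alpha>"
      "\<And>s. (\<forall>i<n. 0 \<le> s i) \<Longrightarrow> (\<exists>i<n. s i \<noteq> 0) \<Longrightarrow>
             (\<exists>i<n. gain_op n Isum g (D_alpha Isum \<alpha> s) i < s i)"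
  shows "\<exists>\<gamma>. class_K \<gamma> \<and>
           (\<forall>x u. Linf u \<and> sys_solution f u x \<longrightarrow>
              Limsup at_top (\<lambda>t. ereal (norm (x t))) \<le> ereal (\<gamma> (linf_norm u)))"
proof -
  obtain h where h: "class_K_weak h" "\<And>b. 0 \<le> b \<Longrightarrow> \<alpha> (h b) = b"
    using class_K_inf_right_inverse[OF small_gain(1)] by blast
  have \<alpha>: "class_K_weak \<alpha>" using small_gain(1) by (simp add: class_K_inf_def class_K_imp_weak)
  have gains': "\<And>i j. i < n \<Longrightarrow> j < n \<Longrightarrow> class_K_weak (g i j)"
    and gains_u': "\<And>i. i < n \<Longrightarrow> class_K_weak (gu i)"
    using gains gains_u by (auto intro: class_K0_imp_weak)
  define \<gamma> where "\<gamma> v = real n * gain_level n g h (\<Sum>i<n. gu i v) + v" for v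
  have "class_K \<gamma>" unfolding \<gamma>_def
    by (intro class_K_weak_add_id class_K_weak_scale class_K_weak_compose[OF class_K_weak_gain_level]
        class_K_weak_sum gains' gains_u' h(1)) auto
  moreover have "Limsup at_top (\<lambda>t. ereal (norm (x t))) \<le> ereal (\<gamma> (linf_norm u))"
    if u: "Linf u" and sol: "sys_solution f u x" for x u
  proof -
    obtain C where "\<And>t. 0 \<le> t \<Longrightarrow> norm (x t) \<le> C"
      using unif_bdd[of "max (norm (x 0)) (linf_norm u)"] u sol by force
    from interconnection_Limsup_le[OF equalityD1[OF blocks(1)] gains' gains_u' AG \<alpha> h small_gain(2) sol u this]
    show ?thesis using linf_norm_nonneg[of u] unfolding \<gamma>_def by (simp add: order_trans)
  qed
  ultimately show ?thesis by blast
qed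

end
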